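(* Let $(G,M,\Delta)$ be a Garside structure and $(H,N,\delta)$ a parabolic substructure with $H\neq G$ and $H\neq\{1\}$. Let $\mathcal S=\mathrm{Div}(\Delta)\setminus\{1\}$ and $d$ the word metric on $G$ with respect to $\mathcal S$. Then $G$ does not have bounded projections on $H$: there is no constant $K>0$ such that $\mathrm{diam}(\pi_H(\alpha_1)\cup\pi_H(\alpha_2))\le K$ for all $\alpha_1,\alpha_2\in G$ with $d(\alpha_1,\alpha_2)=1$.
   Context: Let $G$ be a group and $M$ a submonoid with $M\cap M^{-1}=\{1\}$. Define $\alpha\le_L\beta$ iff $\alpha^{-1}\beta\in M$, and $\alpha\le_R\beta$ iff $\beta\alpha^{-1}\in M$. For $a\in M$ let $\mathrm{Div}_L(a)=\{b\in M: b\le_L a\}$, $\mathrm{Div}_R(a)=\{b\in M: b\le_R a\}$; $a$ is balanced if these coincide, and then $\mathrm{Div}(a)$ denotes this set. $M$ is Noetherian if each $a\in M$ admits an $n$ such that $a$ is not a product of more than $n$ non-trivial factors. A Garside structure $(G,M,\Delta)$: $\Delta\in M$ balanced, $M$ Noetherian, $\mathrm{Div}(\Delta)$ finite and generating $M$ as a monoid and $G$ as a group, $(G,\le_L)$ a lattice. A parabolic substructure $(H,N,\delta)$: $\delta\in M$ balanced, $H$ (resp. $N$) the subgroup (resp. submonoid) generated by $\mathrm{Div}(\delta)$, and $\mathrm{Div}(\delta)=\mathrm{Div}(\Delta)\cap N$. $d(\alpha,\beta)=\lg(\alpha^{-1}\beta)$ with $\lg$ word length w.r.t. $\mathcal S$;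 $d(\alpha,H)=\min_{\beta\in H}d(\alpha,\beta)$; $\pi_H(\alpha)=\{\beta\in H: d(\alpha,\beta)=d(\alpha,H)\}$; $\mathrm{diam}(X)=\max\{d(\alpha,\beta):\alpha,\beta\in X\}$. *)

theory Defs
  imports Complex_Main "HOL-Algebra.Generated_Groups"
begin

definition wprod :: "('a, 'b) monoid_scheme \<Rightarrow> 'a list \<Rightarrow> 'a" where
  "wprod G ws = foldr (\<lambda>x y. x \<otimes>\<^bsub>G\<^esub> y) ws \<one>\<^bsub>G\<^esub>"

definition monoid_gen :: "('a, 'b) monoid_scheme \<Rightarrow> 'a set \<Rightarrow> 'a set" where
  "monoid_gen G S = {wprod G ws | ws. set ws \<subseteq> S}"

definition leL :: "('a, 'b) monoid_scheme \<Rightarrow> 'a set \<Rightarrow> 'a \<Rightarrow> 'a \<Rightarrow> bool" where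
  "leL G M a b \<longleftrightarrow> inv\<^bsub>G\<^esub> a \<otimes>\<^bsub>G\<^esub> b \<in> M"

definition leR :: "('a, 'b) monoid_scheme \<Rightarrow> 'a set \<Rightarrow> 'a \<Rightarrow> 'a \<Rightarrow> bool" where
  "leR G M a b \<longleftrightarrow> b \<otimes>\<^bsub>G\<^esub> inv\<^bsub>G\<^esub> a \<in> M"

definition DivL :: "('a, 'b) monoid_scheme \<Rightarrow> 'a set \<Rightarrow> 'a \<Rightarrow> 'a set" where
  "DivL G M a = {b \<in> M. leL G M b a}"

definition DivR :: "('a, 'b) monoid_scheme \<Rightarrow> 'a set \<Rightarrow> 'a \<Rightarrow> 'a set" where
  "DivR G M a = {b \<in> M. leR G M b a}"

definition balanced :: "('a, 'b) monoid_scheme \<Rightarrow> 'a set \<Rightarrow> 'a \<Rightarrow> bool" where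
  "balanced G M a \<longleftrightarrow> a \<in> M \<and> DivL G M a = DivR G M a"

text \<open>For balanced elements, Div a denotes the common set of divisors.\<close>
definition Div :: "('a, 'b) monoid_scheme \<Rightarrow> 'a set \<Rightarrow> 'a \<Rightarrow> 'a set" where
  "Div G M a = DivL G M a"

definition pos_submonoid :: "('a, 'b) monoid_scheme \<Rightarrow> 'a set \<Rightarrow> bool" where
  "pos_submonoid G M \<longleftrightarrow> group G \<and> M \<subseteq> carrier G \<and> \<one>\<^bsub>G\<^esub> \<in> M
     \<and> (\<forall>x\<in>M. \<forall>y\<in>M. x \<otimes>\<^bsub>G\<^esub> y \<in> M)
     \<and> M \<inter> (\<lambda>x. inv\<^bsub>G\<^esub> x) ` M = {\<one>\<^bsub>G\<^esub>}"

definition noetherian :: "('a, 'b) monoid_scheme \<Rightarrow> 'a set \<Rightarrow> bool" where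
  "noetherian G M \<longleftrightarrow> (\<forall>a\<in>M. \<exists>n::nat. \<forall>ws. set ws \<subseteq> M - {\<one>\<^bsub>G\<^esub>} \<and> wprod G ws = a
        \<longrightarrow> length ws \<le> n)"

definition leL_lattice :: "('a, 'b) monoid_scheme \<Rightarrow> 'a set \<Rightarrow> bool" where
  "leL_lattice G M \<longleftrightarrow>
     (\<forall>a\<in>carrier G. \<forall>b\<in>carrier G.
        (\<exists>c\<in>carrier G. leL G M a c \<and> leL G M b c \<and>
            (\<forall>e\<in>carrier G. leL G M a e \<and> leL G M b e \<longrightarrow> leL G M c e)) \<and>
        (\<exists>c\<in>carrier G. leL G M c a \<and> leL G M c b \<and>
            (\<forall>e\<in>carrier G. leL G M e a \<and> leL G M e b \<longrightarrow> leL G M e c)))"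

definition garside_structure :: "('a, 'b) monoid_scheme \<Rightarrow> 'a set \<Rightarrow> 'a \<Rightarrow> bool" where
  "garside_structure G M \<Delta> \<longleftrightarrow>
     pos_submonoid G M \<and> balanced G M \<Delta> \<and> noetherian G M \<and>
     finite (Div G M \<Delta>) \<and>
     monoid_gen G (Div G M \<Delta>) = M \<and>
     generate G (Div G M \<Delta>) = carrier G \<and>
     leL_lattice G M"

definition parabolic_substructure ::
  "('a, 'b) monoid_scheme \<Rightarrow> 'a set \<Rightarrow> 'a \<Rightarrow> 'a set \<Rightarrow> 'a set \<Rightarrow> 'a \<Rightarrow> bool" where
  "parabolic_substructure G M \<Delta> H N \<delta> \<longleftrightarrow>
     \<delta> \<in> M \<and> balanced G M \<delta> \<and>
     H = generate G (Div G M \<delta>) \<and>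
     N = monoid_gen G (Div G M \<delta>) \<and>
     Div G M \<delta> = Div G M \<Delta> \<inter> N"

definition word_len :: "('a, 'b) monoid_scheme \<Rightarrow> 'a set \<Rightarrow> 'a \<Rightarrow> nat" where
  "word_len G S x = (LEAST n. \<exists>ws. length ws = n \<and>
       set ws \<subseteq> S \<union> (\<lambda>s. inv\<^bsub>G\<^esub> s) ` S \<and> wprod G ws = x)"

definition wdist :: "('a, 'b) monoid_scheme \<Rightarrow> 'a set \<Rightarrow> 'a \<Rightarrow> 'a \<Rightarrow> nat" where
  "wdist G S a b = word_len G S (inv\<^bsub>G\<^esub> a \<otimes>\<^bsub>G\<^esub> b)"

definition set_dist :: "('a, 'b) monoid_scheme \<Rightarrow> 'a set \<Rightarrow> 'a \<Rightarrow> 'a set \<Rightarrow> nat" where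
  "set_dist G S a H = (LEAST n. \<exists>b\<in>H. wdist G S a b = n)"

definition proj :: "('a, 'b) monoid_scheme \<Rightarrow> 'a set \<Rightarrow> 'a set \<Rightarrow> 'a \<Rightarrow> 'a set" where
  "proj G S H a = {b \<in> H. wdist G S a b = set_dist G S a H}"

definition diam_le :: "('a, 'b) monoid_scheme \<Rightarrow> 'a set \<Rightarrow> 'a set \<Rightarrow> real \<Rightarrow> bool" where
  "diam_le G S X K \<longleftrightarrow> (\<forall>a\<in>X. \<forall>b\<in>X. real (wdist G S a b) \<le> K)"

end

theory Submission
  imports Defs
begin

text \<open>Put \<open>\<alpha>\<^sub>1 = \<Delta> [^] k\<close> and \<open>\<alpha>\<^sub>2 = \<Delta> [^] k \<otimes> \<delta>\<close>, which are at distance \<open>\<bar>\<delta>\<bar> = 1\<close>.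
  No element of \<open>H\<close> is left-divisible by \<open>\<Delta>\<close>: the meet of \<open>\<Delta>\<close> with an element of \<open>N\<close>
  divides \<open>\<delta>\<close>, so otherwise every divisor of \<open>\<Delta>\<close> would divide \<open>\<delta>\<close> and \<open>H = G\<close>.
  Since \<open>\<Delta> [^] n \<otimes> w\<close> is positive for every word \<open>w\<close> of length \<open>n\<close> in the generators, a word
  of length less than \<open>k\<close> from \<open>\<Delta> [^] k\<close> to \<open>H\<close> would make \<open>\<Delta>\<close> divide an element of \<open>H\<close>.
  Hence \<open>\<Delta> [^] k\<close> is at distance exactly \<open>k\<close> from \<open>H\<close>, attained both at \<open>\<one>\<close> and at
  \<open>\<delta> [^] k\<close>. But \<open>\<delta>\<close> is a non-trivial positive element, so it has infinite order, and
  in a finitely generated group the lengths of its powers are unbounded.\<close>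

section \<open>Words and word length\<close>

lemma wprod_Nil [simp]: "wprod G [] = \<one>\<^bsub>G\<^esub>"
  by (simp add: wprod_def)

lemma wprod_Cons [simp]: "wprod G (x # xs) = x \<otimes>\<^bsub>G\<^esub> wprod G xs"
  by (simp add: wprod_def)

lemma word_len_le:
  "set ws \<subseteq> S \<union> (\<lambda>s. inv\<^bsub>G\<^esub> s) ` S \<Longrightarrow> word_len G S (wprod G ws) \<le> length ws"
  unfolding word_len_def by (rule Least_le) blast

lemma word_len_one: "word_len G S \<one>\<^bsub>G\<^esub> = 0"
  using word_len_le[of "[]" S G] by simp

lemma proj_memI:
  assumes "b \<in> H" and "\<And>b'. b' \<in> H \<Longrightarrow> wdist G S a b \<le> wdist G S a b'"
  shows "b \<in> proj G S H a"
proof -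
  have "set_dist G S a H = wdist G S a b"
    unfolding set_dist_def using assms by (intro Least_equality) auto
  then show ?thesis
    using assms(1) by (simp add: proj_def)
qed

context group
begin

lemma inv_mult_cancel_left [simp]: "g \<in> carrier G \<Longrightarrow> y \<in> carrier G \<Longrightarrow> inv g \<otimes> (g \<otimes> y) = y"
  by (simp add: m_assoc[symmetric])

lemma mult_inv_cancel_left [simp]: "g \<in> carrier G \<Longrightarrow> y \<in> carrier G \<Longrightarrow> g \<otimes> (inv g \<otimes> y) = y"
  by (simp add: m_assoc[symmetric])

lemma wprod_closed: "set ws \<subseteq> carrier G \<Longrightarrow> wprod G ws \<in> carrier G"
  by (induct ws) auto

lemma wprod_append:
  "set xs \<subseteq> carrier G \<Longrightarrow> set ys \<subseteq> carrier G \<Longrightarrow> wprod G (xs @ ys) = wprod G xs \<otimes> wprod G ys"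
  by (induct xs) (auto simp: m_assoc wprod_closed)

lemma wprod_conj:
  assumes "g \<in> carrier G" "set ws \<subseteq> carrier G"
  shows "g \<otimes> wprod G ws \<otimes> inv g = wprod G (map (\<lambda>x. g \<otimes> x \<otimes> inv g) ws)"
  using assms(2)
proof (induct ws)
  case (Cons x ws)
  then have "x \<in> carrier G" "wprod G ws \<in> carrier G"
    by (auto intro: wprod_closed)
  then have "g \<otimes> (x \<otimes> wprod G ws) \<otimes> inv g = (g \<otimes> x \<otimes> inv g) \<otimes> (g \<otimes> wprod G ws \<otimes> inv g)"
    using assms(1) by (simp add: m_assoc)
  with Cons show ?case
    by simp
qed (use assms(1) in simp)

lemma monoid_gen_one: "\<one> \<in> monoid_gen G A"
  unfolding monoid_gen_def by (intro CollectI exI[of _ "[]"]) simp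

lemma monoid_gen_incl: "a \<in> A \<Longrightarrow> a \<in> carrier G \<Longrightarrow> a \<in> monoid_gen G A"
  unfolding monoid_gen_def by (intro CollectI exI[of _ "[a]"]) simp

lemma monoid_gen_mult:
  assumes "A \<subseteq> carrier G" "x \<in> monoid_gen G A" "y \<in> monoid_gen G A"
  shows "x \<otimes> y \<in> monoid_gen G A"
proof -
  obtain xs ys where "set xs \<subseteq> A" "x = wprod G xs" "set ys \<subseteq> A" "y = wprod G ys"
    using assms(2,3) by (auto simp: monoid_gen_def)
  with assms(1) show ?thesis
    unfolding monoid_gen_def by (intro CollectI exI[of _ "xs @ ys"]) (auto simp: wprod_append)
qed

lemma monoid_gen_conj_closed:
  assumes "A \<subseteq> carrier G" "g \<in> carrier G" "\<And>a. a \<in> A \<Longrightarrow> g \<otimes> a \<otimes> inv g \<in> A"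
    and "x \<in> monoid_gen G A"
  shows "g \<otimes> x \<otimes> inv g \<in> monoid_gen G A"
proof -
  obtain ws where ws: "set ws \<subseteq> A" "x = wprod G ws"
    using assms(4) by (auto simp: monoid_gen_def)
  then have "g \<otimes> x \<otimes> inv g = wprod G (map (\<lambda>y. g \<otimes> y \<otimes> inv g) ws)"
    using assms(1,2) wprod_conj by auto
  moreover have "set (map (\<lambda>y. g \<otimes> y \<otimes> inv g) ws) \<subseteq> A"
    using ws(1) assms(3) by auto
  ultimately show ?thesis
    unfolding monoid_gen_def by blast
qed

lemma conj_pow_closed:
  assumes "A \<subseteq> carrier G" "g \<in> carrier G" "\<And>a. a \<in> A \<Longrightarrow> g \<otimes> a \<otimes> inv g \<in> A"
    and "a \<in> A"
  shows "g [^] (k::nat) \<otimes> a \<otimes> inv (g [^] k) \<in> A"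
proof (induct k)
  case (Suc k)
  have "a \<in> carrier G"
    using assms(1,4) by blast
  then have "g [^] Suc k \<otimes> a \<otimes> inv (g [^] Suc k) = g \<otimes> (g [^] k \<otimes> a \<otimes> inv (g [^] k)) \<otimes> inv g"
    using assms(2) unfolding nat_pow_Suc2[OF assms(2)]
    by (simp add: inv_mult_group m_assoc del: nat_pow_Suc)
  with Suc assms(3) show ?case
    by simp
qed (use assms in auto)

lemma nat_pow_inj:
  assumes "x \<in> carrier G" "\<And>n::nat. n > 0 \<Longrightarrow> x [^] n \<noteq> \<one>"
  shows "inj (\<lambda>n::nat. x [^] n)"
proof (rule injI)
  have "m \<le> n" if "x [^] m = x [^] n" for m n :: nat
    using pow_eq_div2[OF assms(1) that] assms(2)[of "m - n"] by linarith
  then show "m = n" if "x [^] m = x [^] n" for m n :: nat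
    using that by (simp add: order_antisym)
qed

lemma generate_Diff_one: "generate G (A - {\<one>}) = generate G A"
proof
  show "generate G (A - {\<one>}) \<subseteq> generate G A"
    by (rule mono_generate) blast
  show "generate G A \<subseteq> generate G (A - {\<one>})"
  proof
    fix x assume "x \<in> generate G A"
    then show "x \<in> generate G (A - {\<one>})"
    proof induct
      case (incl h)
      then show ?case by (cases "h = \<one>") (auto intro: generate.one generate.incl)
    next
      case (inv h)
      then show ?case by (cases "h = \<one>") (auto intro: generate.one generate.inv)
    qed (auto intro: generate.one generate.eng)
  qed
qed

lemma generate_word:
  assumes "S \<subseteq> carrier G" "x \<in> generate G S"
  shows "\<exists>ws. set ws \<subseteq> S \<union> (\<lambda>s. inv s) ` S \<and> wprod G ws = x"
  using assms(2)
proof induct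
  case one
  show ?case by (intro exI[of _ "[]"]) simp
next
  case (incl h)
  with assms(1) show ?case by (intro exI[of _ "[h]"]) auto
next
  case (inv h)
  with assms(1) show ?case by (intro exI[of _ "[inv h]"]) auto
next
  case (eng h1 h2)
  then obtain xs ys where "set xs \<subseteq> S \<union> (\<lambda>s. inv s) ` S" "wprod G xs = h1"
    and "set ys \<subseteq> S \<union> (\<lambda>s. inv s) ` S" "wprod G ys = h2"
    by blast
  moreover have "S \<union> (\<lambda>s. inv s) ` S \<subseteq> carrier G"
    using assms(1) by auto
  ultimately show ?case
    by (intro exI[of _ "xs @ ys"]) (simp add: wprod_append subset_trans)
qed

lemma word_len_witness:
  assumes "S \<subseteq> carrier G" "x \<in> generate G S"
  shows "\<exists>ws. length ws = word_len G S x \<and> set ws \<subseteq> S \<union> (\<lambda>s. inv s) ` S \<and> wprod G ws = x"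
proof -
  have "\<exists>n ws. length ws = n \<and> set ws \<subseteq> S \<union> (\<lambda>s. inv s) ` S \<and> wprod G ws = x"
    using generate_word[OF assms] by blast
  then show ?thesis
    unfolding word_len_def by (rule LeastI_ex)
qed

lemma word_len_letter_le:
  assumes "S \<subseteq> carrier G" "s \<in> S \<union> (\<lambda>s. inv s) ` S"
  shows "word_len G S s \<le> 1"
proof -
  have "s \<in> carrier G"
    using assms by auto
  then show ?thesis
    using word_len_le[of "[s]" S G] assms(2) by simp
qed

lemma word_len_generator:
  assumes "S \<subseteq> carrier G" "s \<in> S" "s \<noteq> \<one>"
  shows "word_len G S s = 1"
proof -
  obtain ws where "length ws = word_len G S s" "wprod G ws = s"
    using word_len_witness[OF assms(1) generate.incl[OF assms(2)]] by blast
  then have "word_len G S s \<noteq> 0"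
    using assms(3) by (cases ws) auto
  moreover have "word_len G S s \<le> 1"
    using word_len_letter_le assms(1,2) by blast
  ultimately show ?thesis
    by simp
qed

lemma word_len_mult_le:
  assumes "S \<subseteq> carrier G" "x \<in> generate G S" "y \<in> generate G S"
  shows "word_len G S (x \<otimes> y) \<le> word_len G S x + word_len G S y"
proof -
  obtain xs ys where xs: "length xs = word_len G S x" "set xs \<subseteq> S \<union> (\<lambda>s. inv s) ` S" "wprod G xs = x"
    and ys: "length ys = word_len G S y" "set ys \<subseteq> S \<union> (\<lambda>s. inv s) ` S" "wprod G ys = y"
    using word_len_witness[OF assms(1,2)] word_len_witness[OF assms(1,3)] by blast
  have "S \<union> (\<lambda>s. inv s) ` S \<subseteq> carrier G"
    using assms(1) by auto
  then have "x \<otimes> y = wprod G (xs @ ys)"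
    using xs ys by (simp add: wprod_append subset_trans)
  then show ?thesis
    using word_len_le[of "xs @ ys" S G] xs ys by simp
qed

lemma word_len_pow_le:
  assumes "S \<subseteq> carrier G" "x \<in> generate G S"
  shows "word_len G S (x [^] (k::nat)) \<le> k * word_len G S x"
proof (induct k)
  case 0
  show ?case
    by (simp add: word_len_one)
next
  case (Suc k)
  have "x [^] k \<in> generate G S"
    by (induct k) (auto intro: generate.one generate.eng assms(2))
  then have "word_len G S (x [^] k \<otimes> x) \<le> word_len G S (x [^] k) + word_len G S x"
    using word_len_mult_le assms by blast
  with Suc show ?case
    by simp
qed

lemma word_len_pow_unbounded:
  assumes "finite S" "S \<subseteq> carrier G" "x \<in> generate G S" "inj (\<lambda>k::nat. x [^] k)"
  shows "\<exists>k::nat. R < word_len G S (x [^] k)"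
proof (rule ccontr)
  assume bounded: "\<not> ?thesis"
  let ?W = "wprod G ` {ws. set ws \<subseteq> S \<union> (\<lambda>s. inv s) ` S \<and> length ws \<le> R}"
  have "finite ?W"
    using finite_lists_length_le[of "S \<union> (\<lambda>s. inv s) ` S" R] assms(1) by simp
  moreover have "range (\<lambda>k::nat. x [^] k) \<subseteq> ?W"
  proof clarify
    fix k :: nat
    have "x [^] k \<in> generate G S"
      by (induct k) (auto intro: generate.one generate.eng assms(3))
    then obtain ws where "length ws = word_len G S (x [^] k)"
        "set ws \<subseteq> S \<union> (\<lambda>s. inv s) ` S" "wprod G ws = x [^] k"
      using word_len_witness[OF assms(2)] by blast
    with bounded show "x [^] k \<in> ?W"
      by (intro image_eqI[of _ _ ws]) (auto simp: not_less)
  qed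
  ultimately have "finite (range (\<lambda>k::nat. x [^] k))"
    by (rule finite_subset[rotated])
  with assms(4) show False
    using finite_imageD by blast
qed

end

section \<open>Positive submonoids\<close>

locale positive_submonoid = group G for G (structure) +
  fixes M :: "'a set"
  assumes positive: "pos_submonoid G M"
begin

lemma M_subset_carrier: "M \<subseteq> carrier G"
  and one_in_M: "\<one> \<in> M"
  and M_mult_closed: "x \<in> M \<Longrightarrow> y \<in> M \<Longrightarrow> x \<otimes> y \<in> M"
  using positive by (auto simp: pos_submonoid_def)

lemma M_carrier [intro]: "x \<in> M \<Longrightarrow> x \<in> carrier G"
  using M_subset_carrier by blast

lemma M_inv_eq_one:
  assumes "x \<in> M" "inv x \<in> M"
  shows "x = \<one>"
proof -
  have "x \<in> (\<lambda>y. inv y) ` M"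
    using assms by (intro image_eqI[of _ _ "inv x"]) (simp_all add: M_carrier)
  with assms(1) positive show ?thesis
    by (auto simp: pos_submonoid_def)
qed

lemma M_nat_pow_closed: "x \<in> M \<Longrightarrow> x [^] (k::nat) \<in> M"
  by (induct k) (auto simp: one_in_M M_mult_closed)

lemma monoid_gen_subset_M:
  assumes "A \<subseteq> M"
  shows "monoid_gen G A \<subseteq> M"
proof -
  have "wprod G ws \<in> M" if "set ws \<subseteq> A" for ws
    using that assms by (induct ws) (auto simp: one_in_M M_mult_closed)
  then show ?thesis
    by (auto simp: monoid_gen_def)
qed

lemma M_nat_pow_inj:
  assumes "x \<in> M" "x \<noteq> \<one>"
  shows "inj (\<lambda>k::nat. x [^] k)"
proof (rule nat_pow_inj)
  fix n :: nat
  assume "n > 0"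
  then obtain m where n: "n = Suc m"
    using gr0_implies_Suc by blast
  show "x [^] n \<noteq> \<one>"
  proof
    assume "x [^] n = \<one>"
    then have "inv x = x [^] m"
      using assms(1) by (intro inv_equality) (auto simp: n)
    then show False
      using M_inv_eq_one M_nat_pow_closed assms by metis
  qed
qed (use assms in auto)

lemma leL_refl: "a \<in> carrier G \<Longrightarrow> leL G M a a"
  by (simp add: leL_def one_in_M)

lemma leL_trans:
  assumes "leL G M a b" "leL G M b c" "a \<in> carrier G" "b \<in> carrier G" "c \<in> carrier G"
  shows "leL G M a c"
proof -
  have "(inv a \<otimes> b) \<otimes> (inv b \<otimes> c) \<in> M"
    using assms(1,2) M_mult_closed by (simp add: leL_def)
  then show ?thesis
    using assms(3-5) by (simp add: leL_def m_assoc)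
qed

lemma one_leL_iff: "x \<in> carrier G \<Longrightarrow> leL G M \<one> x \<longleftrightarrow> x \<in> M"
  by (simp add: leL_def)

lemma leL_mult_right: "x \<in> carrier G \<Longrightarrow> a \<in> M \<Longrightarrow> leL G M x (x \<otimes> a)"
  by (simp add: leL_def M_carrier)

lemma leL_mult_left_cancel:
  assumes "a \<in> carrier G" "x \<in> carrier G" "y \<in> carrier G"
  shows "leL G M (a \<otimes> x) (a \<otimes> y) \<longleftrightarrow> leL G M x y"
  using assms by (simp add: leL_def inv_mult_group m_assoc)

lemma Div_subset_M: "Div G M e \<subseteq> M"
  by (auto simp: Div_def DivL_def)

lemma mem_Div_iff: "b \<in> Div G M e \<longleftrightarrow> b \<in> M \<and> leL G M b e"
  by (simp add: Div_def DivL_def)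

lemma mem_Div_iff_right:
  "balanced G M e \<Longrightarrow> b \<in> Div G M e \<longleftrightarrow> b \<in> M \<and> e \<otimes> inv b \<in> M"
  by (simp add: balanced_def Div_def DivR_def leR_def)

lemma balanced_in_Div: "balanced G M e \<Longrightarrow> e \<in> Div G M e"
  by (auto simp: balanced_def mem_Div_iff intro: leL_refl)

lemma Div_complement_left:
  assumes "balanced G M e" "a \<in> Div G M e"
  shows "inv a \<otimes> e \<in> Div G M e"
proof -
  have "a \<in> M" "e \<in> M" "inv a \<otimes> e \<in> M" "e \<otimes> inv a \<in> M"
    using assms mem_Div_iff_right[OF assms(1)] by (auto simp: balanced_def mem_Div_iff leL_def)
  then show ?thesis
    by (simp add: mem_Div_iff_right[OF assms(1)] M_carrier inv_mult_group m_assoc[symmetric])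
qed

lemma Div_complement_right:
  assumes "balanced G M e" "a \<in> Div G M e"
  shows "e \<otimes> inv a \<in> Div G M e"
proof -
  have "a \<in> M" "e \<in> M" "e \<otimes> inv a \<in> M"
    using assms mem_Div_iff_right[OF assms(1)] by (auto simp: balanced_def)
  then show ?thesis
    by (simp add: mem_Div_iff leL_def M_carrier inv_mult_group m_assoc)
qed

text \<open>Each conjugate is a complement of a complement.\<close>

lemma Div_conj_closed:
  assumes "balanced G M e" "a \<in> Div G M e"
  shows "e \<otimes> a \<otimes> inv e \<in> Div G M e" and "inv e \<otimes> a \<otimes> e \<in> Div G M e"
proof -
  have "a \<in> carrier G" "e \<in> carrier G"
    using assms by (auto simp: balanced_def mem_Div_iff)
  moreover have "e \<otimes> inv (e \<otimes> inv a) \<in> Div G M e" "inv (inv a \<otimes> e) \<otimes> e \<in> Div G M e"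
    using assms by (auto intro: Div_complement_left Div_complement_right)
  ultimately show "e \<otimes> a \<otimes> inv e \<in> Div G M e" "inv e \<otimes> a \<otimes> e \<in> Div G M e"
    by (simp_all add: inv_mult_group m_assoc)
qed

lemma Div_conj_pow_closed:
  assumes "balanced G M e" "a \<in> Div G M e"
  shows "e [^] (k::nat) \<otimes> a \<otimes> inv (e [^] k) \<in> Div G M e"
    and "inv (e [^] k) \<otimes> a \<otimes> e [^] k \<in> Div G M e"
proof -
  have e: "e \<in> carrier G" and Div: "Div G M e \<subseteq> carrier G"
    using assms(1) Div_subset_M by (auto simp: balanced_def)
  show "e [^] k \<otimes> a \<otimes> inv (e [^] k) \<in> Div G M e"
    using conj_pow_closed[OF Div e Div_conj_closed(1)[OF assms(1)] assms(2)] .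
  show "inv (e [^] k) \<otimes> a \<otimes> e [^] k \<in> Div G M e"
    using conj_pow_closed[OF Div inv_closed[OF e] _ assms(2), of k] Div_conj_closed(2)[OF assms(1)] e
    by (simp add: nat_pow_inv)
qed

lemma monoid_gen_Div_conj_pow_closed:
  assumes "balanced G M e" "x \<in> monoid_gen G (Div G M e)"
  shows "e [^] (k::nat) \<otimes> x \<otimes> inv (e [^] k) \<in> monoid_gen G (Div G M e)"
    and "inv (e [^] k) \<otimes> x \<otimes> e [^] k \<in> monoid_gen G (Div G M e)"
proof -
  have e: "e [^] k \<in> carrier G" and Div: "Div G M e \<subseteq> carrier G"
    using assms(1) Div_subset_M by (auto simp: balanced_def)
  show "e [^] k \<otimes> x \<otimes> inv (e [^] k) \<in> monoid_gen G (Div G M e)"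
    using monoid_gen_conj_closed[OF Div e Div_conj_pow_closed(1)[OF assms(1)] assms(2)] .
  show "inv (e [^] k) \<otimes> x \<otimes> e [^] k \<in> monoid_gen G (Div G M e)"
    using monoid_gen_conj_closed[OF Div inv_closed[OF e] _ assms(2)]
      Div_conj_pow_closed(2)[OF assms(1)] e
    by simp
qed

end

section \<open>Parabolic substructures of Garside structures\<close>

locale garside_parabolic = group G for G (structure) +
  fixes M :: "'a set" and \<Delta> :: 'a and H N :: "'a set" and \<delta> :: 'a
  assumes garside: "garside_structure G M \<Delta>"
    and parabolic: "parabolic_substructure G M \<Delta> H N \<delta>"

sublocale garside_parabolic \<subseteq> positive_submonoid
  using garside by unfold_locales (simp add: garside_structure_def)

context garside_parabolic
begin

abbreviation "D \<equiv> Div G M \<Delta>"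
abbreviation "E \<equiv> Div G M \<delta>"
abbreviation "S \<equiv> D - {\<one>}"

lemma Delta_balanced: "balanced G M \<Delta>"
  and D_finite: "finite D"
  and monoid_gen_D: "monoid_gen G D = M"
  and generate_D: "generate G D = carrier G"
  and leL_lattice: "leL_lattice G M"
  using garside by (simp_all add: garside_structure_def)

lemma delta_balanced: "balanced G M \<delta>"
  and H_eq: "H = generate G E"
  and N_eq: "N = monoid_gen G E"
  and E_eq: "E = D \<inter> N"
  using parabolic unfolding parabolic_substructure_def by blast+

lemma Delta_in_D: "\<Delta> \<in> D" and delta_in_E: "\<delta> \<in> E"
  using Delta_balanced delta_balanced by (simp_all add: balanced_in_Div)

lemma delta_in_D: "\<delta> \<in> D"
  using delta_in_E E_eq by simp

lemma delta_in_M: "\<delta> \<in> M" and Delta_in_M: "\<Delta> \<in> M"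
  using delta_in_E Delta_in_D Div_subset_M by blast+

lemma D_subset_carrier: "D \<subseteq> carrier G" and E_subset_carrier: "E \<subseteq> carrier G"
  using Div_subset_M M_subset_carrier by blast+

lemma Delta_carrier [simp]: "\<Delta> \<in> carrier G" and delta_carrier [simp]: "\<delta> \<in> carrier G"
  using Delta_in_D delta_in_E D_subset_carrier E_subset_carrier by blast+

lemma N_subset_M: "N \<subseteq> M"
  unfolding N_eq by (rule monoid_gen_subset_M[OF Div_subset_M])

lemma E_subset_N: "E \<subseteq> N"
  unfolding N_eq using E_subset_carrier by (blast intro: monoid_gen_incl)

lemma leL_meetE:
  assumes "x \<in> carrier G" "y \<in> carrier G"
  obtains m where "m \<in> carrier G" "leL G M m x" "leL G M m y"
    "\<And>z. z \<in> carrier G \<Longrightarrow> leL G M z x \<Longrightarrow> leL G M z y \<Longrightarrow> leL G M z m"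
proof -
  have "\<exists>m\<in>carrier G. leL G M m x \<and> leL G M m y \<and>
      (\<forall>z\<in>carrier G. leL G M z x \<and> leL G M z y \<longrightarrow> leL G M z m)"
    using leL_lattice assms unfolding leL_lattice_def by blast
  then show ?thesis
    using that by blast
qed

lemma leL_delta_if_between:
  assumes "a \<in> E" "w \<in> M" "leL G M w \<delta>" "u \<in> carrier G"
    and "leL G M a u" "leL G M u (a \<otimes> w)" "leL G M u \<Delta>"
  shows "leL G M u \<delta>"
proof -
  define v where "v = inv a \<otimes> u"
  have a: "a \<in> carrier G"
    using assms(1) E_subset_carrier by blast
  have v: "v \<in> M" "v \<in> carrier G" and u: "u = a \<otimes> v"
    using assms(4,5) a by (auto simp: v_def leL_def)
  have "leL G M v w"
    using assms(6) leL_mult_left_cancel[OF a v(2)] assms(2) u by auto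
  then have "leL G M v \<delta>"
    using leL_trans[OF _ assms(3) v(2) M_carrier[OF assms(2)] delta_carrier] by blast
  then have "v \<in> E"
    using v(1) mem_Div_iff by blast
  then have "u \<in> N"
    using assms(1) E_subset_N E_subset_carrier u unfolding N_eq by (blast intro: monoid_gen_mult)
  moreover have "u \<in> D"
    using \<open>u \<in> N\<close> N_subset_M assms(7) mem_Div_iff by blast
  ultimately show ?thesis
    using E_eq mem_Div_iff by blast
qed

lemma Delta_leL_mult_Delta:
  assumes "a \<in> D"
  shows "leL G M \<Delta> (a \<otimes> \<Delta>)"
proof -
  have "inv \<Delta> \<otimes> a \<otimes> \<Delta> \<in> M"
    using Div_conj_closed(2)[OF Delta_balanced assms] Div_subset_M by blast
  then show ?thesis
    using subsetD[OF D_subset_carrier assms] by (simp add: leL_def m_assoc)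
qed

text \<open>Induction on a word for \<open>n = a \<otimes> n'\<close>: the meet \<open>u\<close> of \<open>\<Delta>\<close> and
  \<open>a \<otimes> (n' \<and> \<Delta>)\<close> lies between \<open>a\<close> and \<open>a \<otimes> \<delta>\<close>, hence in \<open>N\<close>, so as a divisor
  of \<open>\<Delta>\<close> it divides \<open>\<delta>\<close>; every common lower bound of \<open>n\<close> and \<open>\<Delta>\<close> lies below \<open>u\<close>.\<close>

lemma leL_delta_if_leL_word_Delta:
  assumes "set ws \<subseteq> E" "z \<in> carrier G" "leL G M z (wprod G ws)" "leL G M z \<Delta>"
  shows "leL G M z \<delta>"
  using assms
proof (induct ws arbitrary: z)
  case Nil
  then show ?case
    using leL_trans[of z \<one> \<delta>] delta_in_E Div_subset_M by (auto simp: one_leL_iff)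
next
  case (Cons a ws)
  let ?n' = "wprod G ws"
  have a: "a \<in> E" "a \<in> D" "a \<in> carrier G"
    using Cons.prems(1) E_eq E_subset_carrier by auto
  have n': "?n' \<in> M" "?n' \<in> carrier G"
    using Cons.prems(1) E_subset_carrier N_subset_M by (auto simp: N_eq monoid_gen_def)
  obtain w where w: "w \<in> carrier G" "leL G M w ?n'" "leL G M w \<Delta>"
    and w_greatest: "\<And>y. y \<in> carrier G \<Longrightarrow> leL G M y ?n' \<Longrightarrow> leL G M y \<Delta> \<Longrightarrow> leL G M y w"
    using leL_meetE[OF n'(2) Delta_carrier] by blast
  have "leL G M \<one> w"
    by (rule w_greatest[OF one_closed])
      (use n' subsetD[OF Div_subset_M Delta_in_D] in \<open>simp_all add: one_leL_iff\<close>)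
  then have w_M: "w \<in> M"
    using one_leL_iff[OF w(1)] by blast
  have w_delta: "leL G M w \<delta>"
    using Cons.prems(1) w by (intro Cons.hyps) auto
  obtain u where u: "u \<in> carrier G" "leL G M u (a \<otimes> w)" "leL G M u \<Delta>"
    and u_greatest: "\<And>y. y \<in> carrier G \<Longrightarrow> leL G M y (a \<otimes> w) \<Longrightarrow> leL G M y \<Delta> \<Longrightarrow> leL G M y u"
    using leL_meetE[OF m_closed[OF a(3) w(1)] Delta_carrier] by blast
  have "leL G M a u"
    using u_greatest[OF a(3) leL_mult_right[OF a(3) w_M]] a(2) mem_Div_iff by blast
  then have u_delta: "leL G M u \<delta>"
    using leL_delta_if_between[OF a(1) w_M w_delta u(1) _ u(2,3)] by blast
  define z' where "z' = inv a \<otimes> z"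
  have z: "z' \<in> carrier G" "z = a \<otimes> z'"
    using a(3) Cons.prems(2) by (simp_all add: z'_def)
  have "leL G M z (a \<otimes> \<Delta>)"
    using leL_trans[OF Cons.prems(4) Delta_leL_mult_Delta[OF a(2)]] a(3) Cons.prems(2) by simp
  then have "leL G M z' \<Delta>"
    using leL_mult_left_cancel[OF a(3) z(1) Delta_carrier] z(2) by simp
  moreover have "leL G M z' ?n'"
    using Cons.prems(3) leL_mult_left_cancel[OF a(3) z(1) n'(2)] z(2) by simp
  ultimately have "leL G M z' w"
    using w_greatest[OF z(1)] by blast
  then have "leL G M z u"
    using u_greatest[OF Cons.prems(2) _ Cons.prems(4)] leL_mult_left_cancel[OF a(3) z(1) w(1)] z(2)
    by simp
  then show ?case
    using leL_trans[OF _ u_delta] Cons.prems(2) u(1) by simp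
qed

lemma leL_delta_if_leL_N_Delta:
  assumes "n \<in> N" "z \<in> carrier G" "leL G M z n" "leL G M z \<Delta>"
  shows "leL G M z \<delta>"
proof -
  obtain ws where "set ws \<subseteq> E" "n = wprod G ws"
    using assms(1) by (auto simp: N_eq monoid_gen_def)
  with assms(2-4) show ?thesis
    using leL_delta_if_leL_word_Delta by blast
qed

lemma H_eq_carrier_if_Delta_leL_delta:
  assumes "leL G M \<Delta> \<delta>"
  shows "H = carrier G"
proof -
  have "D \<subseteq> E"
  proof
    fix a assume "a \<in> D"
    then have "a \<in> M" "leL G M a \<Delta>" "a \<in> carrier G"
      using D_subset_carrier by (auto simp: mem_Div_iff)
    then show "a \<in> E"
      using leL_trans[OF _ assms] by (simp add: mem_Div_iff)
  qed
  then have "carrier G \<subseteq> H"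
    using mono_generate[of D E] by (simp add: generate_D H_eq)
  moreover have "H \<subseteq> carrier G"
    using generate_incl[OF E_subset_carrier] H_eq by blast
  ultimately show ?thesis
    by blast
qed

lemma H_mult_delta_pow_in_N:
  assumes "h \<in> H"
  shows "\<exists>j::nat. h \<otimes> \<delta> [^] j \<in> N"
  using assms unfolding H_eq
proof induct
  case one
  show ?case
    using monoid_gen_one N_eq by (intro exI[of _ 0]) simp
next
  case (incl h)
  then have "h \<in> carrier G" "h \<in> N"
    using E_subset_N E_subset_carrier by auto
  then show ?case
    by (intro exI[of _ 0]) simp
next
  case (inv h)
  then have "inv h \<otimes> \<delta> \<in> N"
    using Div_complement_left[OF delta_balanced] E_subset_N by blast
  then show ?case
    by (intro exI[of _ 1]) simp
next
  case (eng h1 h2)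
  then obtain j1 j2 :: nat where "h1 \<otimes> \<delta> [^] j1 \<in> N" "h2 \<otimes> \<delta> [^] j2 \<in> N"
    by blast
  moreover have "h1 \<in> carrier G" "h2 \<in> carrier G"
    using eng.hyps generate_in_carrier[OF E_subset_carrier] by auto
  ultimately have "(h1 \<otimes> \<delta> [^] j1) \<otimes> (inv (\<delta> [^] j1) \<otimes> (h2 \<otimes> \<delta> [^] j2) \<otimes> \<delta> [^] j1) \<in> N"
    using monoid_gen_mult[OF E_subset_carrier] monoid_gen_Div_conj_pow_closed(2)[OF delta_balanced]
    unfolding N_eq by blast
  moreover have "(h1 \<otimes> \<delta> [^] j1) \<otimes> (inv (\<delta> [^] j1) \<otimes> (h2 \<otimes> \<delta> [^] j2) \<otimes> \<delta> [^] j1)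
      = h1 \<otimes> h2 \<otimes> \<delta> [^] (j2 + j1)"
    using \<open>h1 \<in> carrier G\<close> \<open>h2 \<in> carrier G\<close> by (simp add: m_assoc nat_pow_mult[symmetric])
  ultimately show ?case
    by auto
qed

lemma not_Delta_leL_H:
  assumes "H \<noteq> carrier G" "h \<in> H"
  shows "\<not> leL G M \<Delta> h"
proof
  assume Delta_h: "leL G M \<Delta> h"
  obtain j :: nat where N: "h \<otimes> \<delta> [^] j \<in> N"
    using H_mult_delta_pow_in_N[OF assms(2)] by blast
  have h: "h \<in> carrier G"
    using assms(2) generate_in_carrier[OF E_subset_carrier] H_eq by blast
  have "leL G M h (h \<otimes> \<delta> [^] j)"
    using leL_mult_right[OF h M_nat_pow_closed[OF subsetD[OF Div_subset_M delta_in_E]]] .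
  then have "leL G M \<Delta> (h \<otimes> \<delta> [^] j)"
    using leL_trans[OF Delta_h _ Delta_carrier h] h by simp
  then have "leL G M \<Delta> \<delta>"
    using leL_delta_if_leL_N_Delta[OF N Delta_carrier _ leL_refl[OF Delta_carrier]] by blast
  then show False
    using H_eq_carrier_if_Delta_leL_delta assms(1) by blast
qed

lemma delta_neq_one:
  assumes "H \<noteq> {\<one>}"
  shows "\<delta> \<noteq> \<one>"
proof
  assume delta: "\<delta> = \<one>"
  have "b = \<one>" if "b \<in> E" for b
  proof -
    have "b \<in> M" "inv b \<otimes> \<delta> \<in> M"
      using that by (simp_all add: mem_Div_iff leL_def)
    then show ?thesis
      using M_inv_eq_one M_carrier delta by simp
  qed
  then have "E - {\<one>} = {}"
    by blast
  moreover have "H = generate G (E - {\<one>})"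
    by (simp only: H_eq generate_Diff_one)
  ultimately have "H = generate G {}"
    by (simp only:)
  moreover have "generate G {} = {\<one>}"
  proof
    show "generate G {} \<subseteq> {\<one>}"
    proof
      fix x assume "x \<in> generate G {}"
      then show "x \<in> {\<one>}"
        by induct auto
    qed
  qed (simp add: generate.one)
  ultimately show False
    using assms by simp
qed

lemma S_subset_carrier: "S \<subseteq> carrier G"
  using D_subset_carrier by blast

lemma generate_S: "generate G S = carrier G"
  by (simp add: generate_Diff_one generate_D)

lemma word_len_Div_le:
  assumes "a \<in> D"
  shows "word_len G S a \<le> 1" and "word_len G S (inv a) \<le> 1"
  using assms word_len_letter_le[OF S_subset_carrier, of a]
    word_len_letter_le[OF S_subset_carrier, of "inv a"]
  by (cases "a = \<one>"; auto simp: word_len_one)+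

lemma word_len_delta:
  assumes "H \<noteq> {\<one>}"
  shows "word_len G S \<delta> = 1"
  using word_len_generator[OF S_subset_carrier] delta_in_D delta_neq_one[OF assms] by blast

lemma word_len_delta_pow_unbounded:
  assumes "H \<noteq> {\<one>}"
  shows "\<exists>k::nat. R < word_len G S (\<delta> [^] k)"
  using word_len_pow_unbounded[OF _ S_subset_carrier _ M_nat_pow_inj[OF delta_in_M]]
    D_finite generate_S delta_neq_one[OF assms]
  by simp

lemma Delta_pow_mult_word_in_M:
  assumes "set ws \<subseteq> D \<union> (\<lambda>s. inv s) ` D"
  shows "\<Delta> [^] length ws \<otimes> wprod G ws \<in> M"
  using assms
proof (induct ws)
  case Nil
  then show ?case
    by (simp add: one_in_M)
next
  case (Cons l ws)
  let ?k = "length ws"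
  have l: "l \<in> carrier G" and w: "wprod G ws \<in> carrier G"
    using Cons.prems D_subset_carrier by (auto intro!: wprod_closed)
  have "\<Delta> \<otimes> l \<in> M"
  proof (cases "l \<in> D")
    case True
    then show ?thesis
      using M_mult_closed Div_subset_M Delta_in_M by blast
  next
    case False
    then obtain a where "a \<in> D" "l = inv a"
      using Cons.prems by auto
    then show ?thesis
      using mem_Div_iff_right[OF Delta_balanced] by blast
  qed
  then have "\<Delta> [^] ?k \<otimes> (\<Delta> \<otimes> l) \<otimes> inv (\<Delta> [^] ?k) \<in> M"
    using monoid_gen_Div_conj_pow_closed(1)[OF Delta_balanced, of "\<Delta> \<otimes> l" ?k, unfolded monoid_gen_D]
    by blast
  then have "(\<Delta> [^] ?k \<otimes> (\<Delta> \<otimes> l) \<otimes> inv (\<Delta> [^] ?k)) \<otimes> (\<Delta> [^] ?k \<otimes> wprod G ws) \<in> M"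
    using Cons M_mult_closed by auto
  moreover have "(\<Delta> [^] ?k \<otimes> (\<Delta> \<otimes> l) \<otimes> inv (\<Delta> [^] ?k)) \<otimes> (\<Delta> [^] ?k \<otimes> wprod G ws)
      = \<Delta> [^] length (l # ws) \<otimes> wprod G (l # ws)"
    using l w by (simp add: m_assoc)
  ultimately show ?case
    by simp
qed

lemma dist_Delta_pow_H:
  assumes "H \<noteq> carrier G" "h \<in> H"
  shows "k \<le> wdist G S (\<Delta> [^] k) h"
proof (rule ccontr)
  assume "\<not> ?thesis"
  then obtain k' where k: "k = Suc k'" and short: "word_len G S (inv (\<Delta> [^] k) \<otimes> h) \<le> k'"
    by (cases k) (auto simp: wdist_def)
  have h: "h \<in> carrier G"
    using assms(2) generate_in_carrier[OF E_subset_carrier] H_eq by blast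
  obtain ws where ws: "length ws = word_len G S (inv (\<Delta> [^] k) \<otimes> h)"
      "set ws \<subseteq> S \<union> (\<lambda>s. inv s) ` S" "wprod G ws = inv (\<Delta> [^] k) \<otimes> h"
    using word_len_witness[OF S_subset_carrier, of "inv (\<Delta> [^] k) \<otimes> h"] generate_S h by auto
  then have "\<Delta> [^] length ws \<otimes> (inv (\<Delta> [^] k) \<otimes> h) \<in> M"
    using Delta_pow_mult_word_in_M[of ws] by auto
  then have "\<Delta> [^] (k' - length ws) \<otimes> (\<Delta> [^] length ws \<otimes> (inv (\<Delta> [^] k) \<otimes> h)) \<in> M"
    using M_mult_closed M_nat_pow_closed[OF Delta_in_M] by blast
  moreover have "\<Delta> [^] (k' - length ws) \<otimes> \<Delta> [^] length ws = \<Delta> [^] k'"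
    using nat_pow_mult[OF Delta_carrier, of "k' - length ws" "length ws"] short ws(1) by simp
  moreover have "inv (\<Delta> [^] k) = inv (\<Delta> [^] k') \<otimes> inv \<Delta>"
    unfolding k nat_pow_Suc2[OF Delta_carrier] by (simp add: inv_mult_group)
  ultimately have "inv \<Delta> \<otimes> h \<in> M"
    using h by (simp add: m_assoc[symmetric])
  then show False
    using not_Delta_leL_H[OF assms] by (simp add: leL_def)
qed

lemma dist_Delta_pow_one: "wdist G S (\<Delta> [^] k) \<one> \<le> k"
proof -
  have "word_len G S (inv \<Delta> [^] k) \<le> k * word_len G S (inv \<Delta>)"
    using word_len_pow_le[OF S_subset_carrier] generate_S by simp
  also have "\<dots> \<le> k"
    using word_len_Div_le(2)[OF Delta_in_D] by simp
  finally show ?thesis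
    by (simp add: wdist_def nat_pow_inv)
qed

lemma dist_Delta_pow_delta_pow: "wdist G S (\<Delta> [^] k) (\<delta> [^] k) \<le> (k::nat)"
  unfolding wdist_def
proof (induct k)
  case 0
  show ?case
    by (simp add: word_len_one)
next
  case (Suc k)
  define c where "c = inv (\<Delta> [^] k) \<otimes> (inv \<delta> \<otimes> \<Delta>) \<otimes> \<Delta> [^] k"
  have "c \<in> D"
    unfolding c_def
    by (rule Div_conj_pow_closed(2)[OF Delta_balanced Div_complement_left[OF Delta_balanced delta_in_D]])
  have "inv (\<Delta> [^] Suc k) \<otimes> \<delta> [^] Suc k = inv c \<otimes> (inv (\<Delta> [^] k) \<otimes> \<delta> [^] k)"
    unfolding c_def nat_pow_Suc2[OF Delta_carrier] nat_pow_Suc2[OF delta_carrier]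
    by (simp add: inv_mult_group m_assoc del: nat_pow_Suc)
  then have "word_len G S (inv (\<Delta> [^] Suc k) \<otimes> \<delta> [^] Suc k)
      \<le> word_len G S (inv c) + word_len G S (inv (\<Delta> [^] k) \<otimes> \<delta> [^] k)"
    using word_len_mult_le[OF S_subset_carrier] generate_S \<open>c \<in> D\<close> D_subset_carrier by auto
  then show ?case
    using word_len_Div_le(2)[OF \<open>c \<in> D\<close>] Suc by simp
qed

lemma proj_Delta_pow:
  assumes "H \<noteq> carrier G"
  shows "\<one> \<in> proj G S H (\<Delta> [^] (k::nat))" and "\<delta> [^] k \<in> proj G S H (\<Delta> [^] k)"
proof -
  have "\<delta> [^] k \<in> H"
    unfolding H_eq by (induct k) (auto intro: generate.intros delta_in_E)
  then have H: "\<one> \<in> H" "\<delta> [^] k \<in> H"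
    by (simp_all add: H_eq generate.one)
  show "\<one> \<in> proj G S H (\<Delta> [^] k)"
    by (intro proj_memI H(1) order_trans[OF dist_Delta_pow_one dist_Delta_pow_H[OF assms]])
  show "\<delta> [^] k \<in> proj G S H (\<Delta> [^] k)"
    by (intro proj_memI H(2) order_trans[OF dist_Delta_pow_delta_pow dist_Delta_pow_H[OF assms]])
qed

end

theorem corollary5p4:
  fixes G :: "('a, 'b) monoid_scheme" and M H N :: "'a set" and \<Delta> \<delta> :: 'a
  assumes "garside_structure G M \<Delta>"
    and "parabolic_substructure G M \<Delta> H N \<delta>"
    and "H \<noteq> carrier G"
    and "H \<noteq> {\<one>\<^bsub>G\<^esub>}"
  shows "\<not> (\<exists>K::real. K > 0 \<and>
           (\<forall>\<alpha>1\<in>carrier G. \<forall>\<alpha>2\<in>carrier G.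
              wdist G (Div G M \<Delta> - {\<one>\<^bsub>G\<^esub>}) \<alpha>1 \<alpha>2 = 1 \<longrightarrow>
              diam_le G (Div G M \<Delta> - {\<one>\<^bsub>G\<^esub>})
                 (proj G (Div G M \<Delta> - {\<one>\<^bsub>G\<^esub>}) H \<alpha>1 \<union> proj G (Div G M \<Delta> - {\<one>\<^bsub>G\<^esub>}) H \<alpha>2) K))"
proof
  let ?S = "Div G M \<Delta> - {\<one>\<^bsub>G\<^esub>}"
  have "group G"
    using assms(1) by (simp add: garside_structure_def pos_submonoid_def)
  then interpret garside_parabolic G M \<Delta> H N \<delta>
    using assms(1,2) by (intro garside_parabolic.intro garside_parabolic_axioms.intro)
  assume "\<exists>K::real. K > 0 \<and>
           (\<forall>\<alpha>1\<in>carrier G. \<forall>\<alpha>2\<in>carrier G. wdist G ?S \<alpha>1 \<alpha>2 = 1 \<longrightarrow>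
              diam_le G ?S (proj G ?S H \<alpha>1 \<union> proj G ?S H \<alpha>2) K)"
  then obtain K :: real where bounded: "\<forall>\<alpha>1\<in>carrier G. \<forall>\<alpha>2\<in>carrier G.
      wdist G ?S \<alpha>1 \<alpha>2 = 1 \<longrightarrow> diam_le G ?S (proj G ?S H \<alpha>1 \<union> proj G ?S H \<alpha>2) K"
    by blast
  obtain k :: nat where far: "nat \<lceil>K\<rceil> < word_len G ?S (\<delta> [^]\<^bsub>G\<^esub> k)"
    using word_len_delta_pow_unbounded[OF assms(4)] by blast
  have "wdist G ?S (\<Delta> [^]\<^bsub>G\<^esub> k) (\<Delta> [^]\<^bsub>G\<^esub> k \<otimes>\<^bsub>G\<^esub> \<delta>) = 1"
    using word_len_delta[OF assms(4)] by (simp add: wdist_def m_assoc[symmetric])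
  then have "diam_le G ?S (proj G ?S H (\<Delta> [^]\<^bsub>G\<^esub> k) \<union> proj G ?S H (\<Delta> [^]\<^bsub>G\<^esub> k \<otimes>\<^bsub>G\<^esub> \<delta>)) K"
    using bounded by simp
  then have "real (wdist G ?S \<one>\<^bsub>G\<^esub> (\<delta> [^]\<^bsub>G\<^esub> k)) \<le> K"
    using proj_Delta_pow[OF assms(3), of k] unfolding diam_le_def by blast
  with far show False
    by (simp add: wdist_def) linarith
qed

end
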